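(* There is an absolute constant $K>0$ such that the following holds. Let $n,p,k,b$ be positive integers with $2\le p\le n$ and $1\le k\le n/b$. (i) For every $\gamma\in(0,1)$ with $\left|\gamma-\tfrac12\right|\le \frac{1}{4\log p}$, $$\mathcal{E}\bigl(B_\gamma^{(p)},C_\gamma^{(p)}\bigr)\le K\left(\sqrt{k}\log p+\sqrt{\tfrac{nk}{b}}+\sqrt{\tfrac{nk\log p}{p}}+\sqrt{\tfrac{kp\log p}{b}}\right).$$ (ii) If additionally $p\le \sqrt{n}/4$, then for $\gamma=1-\frac{p}{\sqrt n}$, $$\mathcal{E}\bigl(B_\gamma^{(p)},C_\gamma^{(p)}\bigr)\le K\left(\sqrt{k}\,n^{1/4}+\sqrt{\tfrac{nk}{b}}\right).$$
   Context: $\log$ denotes the natural logarithm. $E\in\mathbb{R}^{n\times n}$ is the prefix-sum matrix: $E_{ij}=1$ if $i\ge j$ and $0$ otherwise. For $0<\gamma<1$ let $(\tilde c_\gamma)_i:=(-1)^i\binom{\gamma}{i}$, where $\binom{\gamma}{i}=\prod_{j=1}^{i}\frac{\gamma+1-j}{j}$ (so $(\tilde c_\gamma)_0=1$); equivalently $(1-x)^\gamma=\sum_{i\ge0}(\tilde c_\gamma)_i x^i$ for $|x|<1$. For an integer bandwidth $p\ge1$, $(C_\gamma^{(p)})^{-1}$ is the $n\times n$ lower-triangular Toeplitz matrix whose $r$-th subdiagonal ($r=0$ being the main diagonal) has all entries equal to $(\tilde c_\gamma)_r$ for $0\le r\le p-1$ and equal to $0$ for $r\ge p$; $C_\gamma^{(p)}$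 is its inverse (the "$\gamma$-BIFR strategy matrix"), and $B_\gamma^{(p)}:=E\,(C_\gamma^{(p)})^{-1}$, so $B_\gamma^{(p)}C_\gamma^{(p)}=E$. For an $n\times n$ matrix $C$ and integers $k,b\ge1$ with $(k-1)b\le n-1$, define $\mathrm{sens}_{k,b}(C):=\bigl\|\sum_{j=0}^{k-1}C_{[\cdot,jb]}\bigr\|_2$, where $C_{[\cdot,m]}$ denotes the $m$-th column of $C$ with columns indexed from $0$ (for lower-triangular Toeplitz $C$ with nonnegative nonincreasing diagonals this is the $\ell_2$-sensitivity under $b$-min-separated participation with at most $k$ participations). The RMSE of a factorization $E=BC$ is $\mathcal{E}(B,C):=\|B\|_F\cdot \mathrm{sens}_{k,b}(C)/\sqrt n$. *)

theory Defs
  imports Complex_Main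
begin

text \<open>n x n real matrices are represented as functions nat => nat => real,
  with indices 0..n-1 (entries outside this range are irrelevant / zero).\<close>

definition ctil :: "real \<Rightarrow> nat \<Rightarrow> real" where
  "ctil \<gamma> i = (-1) ^ i * (\<gamma> gchoose i)"

definition Emat :: "nat \<Rightarrow> nat \<Rightarrow> real" where
  "Emat i j = (if j \<le> i then 1 else 0)"

text \<open>(C_gamma^(p))^{-1}: banded lower-triangular Toeplitz matrix.\<close>
definition strat_inv :: "real \<Rightarrow> nat \<Rightarrow> nat \<Rightarrow> nat \<Rightarrow> real" where
  "strat_inv \<gamma> p i j = (if j \<le> i \<and> i - j < p then ctil \<gamma> (i - j) else 0)"

definition mat_mul :: "nat \<Rightarrow> (nat \<Rightarrow> nat \<Rightarrow> real) \<Rightarrow> (nat \<Rightarrow> nat \<Rightarrow> real) \<Rightarrow> nat \<Rightarrow> nat \<Rightarrow> real" where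
  "mat_mul n A B i j = (\<Sum>l<n. A i l * B l j)"

text \<open>C_gamma^(p): the (unique) n x n inverse of strat_inv (entries outside range set to 0).\<close>
definition strat :: "real \<Rightarrow> nat \<Rightarrow> nat \<Rightarrow> nat \<Rightarrow> nat \<Rightarrow> real" where
  "strat \<gamma> p n = (THE C. (\<forall>i j. (n \<le> i \<or> n \<le> j) \<longrightarrow> C i j = 0) \<and>
     (\<forall>i<n. \<forall>j<n. mat_mul n (strat_inv \<gamma> p) C i j = (if i = j then 1 else 0)) \<and>
     (\<forall>i<n. \<forall>j<n. mat_mul n C (strat_inv \<gamma> p) i j = (if i = j then 1 else 0)))"

definition Bmat :: "real \<Rightarrow> nat \<Rightarrow> nat \<Rightarrow> nat \<Rightarrow> nat \<Rightarrow> real" where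
  "Bmat \<gamma> p n = mat_mul n Emat (strat_inv \<gamma> p)"

definition frob :: "nat \<Rightarrow> (nat \<Rightarrow> nat \<Rightarrow> real) \<Rightarrow> real" where
  "frob n A = sqrt (\<Sum>i<n. \<Sum>j<n. (A i j)^2)"

text \<open>sens_{k,b}(C) = || sum_{j=0}^{k-1} C[.,jb] ||_2 (columns indexed from 0).\<close>
definition sens :: "nat \<Rightarrow> nat \<Rightarrow> nat \<Rightarrow> (nat \<Rightarrow> nat \<Rightarrow> real) \<Rightarrow> real" where
  "sens n k b C = sqrt (\<Sum>i<n. (\<Sum>j<k. C i (j * b))^2)"

definition rmse :: "nat \<Rightarrow> nat \<Rightarrow> nat \<Rightarrow> (nat \<Rightarrow> nat \<Rightarrow> real) \<Rightarrow> (nat \<Rightarrow> nat \<Rightarrow> real) \<Rightarrow> real" where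
  "rmse n k b B C = frob n B * sens n k b C / sqrt (real n)"

end

theory Submission
  imports Defs "HOL-Analysis.Gamma_Function" "HOL-Computational_Algebra.Formal_Power_Series"
begin

text \<open>
  Lower-triangular Toeplitz matrices multiply like their symbols, i.e. like power series. The
  symbol of \<open>strat_inv \<gamma> p\<close> is \<open>(1 - x) ^ \<gamma>\<close> cut off at degree \<open>p\<close>, so \<open>strat \<gamma> p n\<close> is the
  Toeplitz matrix of the reciprocal series and \<open>Bmat \<gamma> p n\<close> that of its product with \<open>1 / (1 - x)\<close>,
  whose coefficients are the partial sums \<open>ctil (\<gamma> - 1) (min m (p - 1))\<close>. The coefficients of the
  reciprocal are nonnegative and nonincreasing, agree with those of \<open>(1 - x) ^ -\<gamma>\<close> below degree \<open>p\<close>,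
  are dominated by them beyond, and sum to at most \<open>1 / ctil (\<gamma> - 1) (p - 1)\<close>. This bounds the
  squared Frobenius norm of \<open>B\<close> by \<open>n * frob_factor\<close> and, splitting the square of each row sum over
  the \<open>k\<close> participating columns into diagonal and cross terms, the squared sensitivity by
  \<open>k * sens_factor\<close>. Both factors are estimated through \<open>r * ctil (\<gamma> - 1) r \<approx> (1 - \<gamma>) r ^ (1 - \<gamma>)\<close>
  and \<open>ctil (-\<gamma>) m \<le> (m + 1) ^ (\<gamma> - 1)\<close>: near \<open>\<gamma> = 1/2\<close> the powers \<open>r ^ (2 (1 - \<gamma>))\<close> stay within a
  factor \<open>2\<close> of \<open>r\<close> for \<open>r \<le> p\<close>, which produces the logarithms, and for \<open>\<gamma> = 1 - p / sqrt n\<close> one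
  has \<open>n (1 - \<gamma>)\<^sup>2 = p\<^sup>2\<close>.
\<close>

section \<open>Coefficients of \<open>(1 - x) ^ \<gamma>\<close>\<close>

lemma ctil_0 [simp]: "ctil a 0 = 1"
  by (simp add: ctil_def)

lemma ctil_Suc: "ctil a (Suc r) = ctil a r * (real r - a) / (real r + 1)"
proof -
  have "(a gchoose Suc r) = (a gchoose r) * (a - real r) / (real r + 1)"
    using gbinomial_mult_1[of a r] by (simp add: field_simps)
  then show ?thesis
    unfolding ctil_def by (simp only: power_Suc) (simp add: field_simps)
qed

lemma ctil_Suc_absorb: "ctil a (Suc r) = - a * ctil (a - 1) r / (real r + 1)"
proof -
  have "(a gchoose Suc r) = a * ((a - 1) gchoose r) / (real r + 1)"
    using gbinomial_absorption[of r a] by (simp add: field_simps)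
  then show ?thesis
    by (simp add: ctil_def)
qed

lemma sum_ctil_atMost: "(\<Sum>i\<le>r. ctil a i) = ctil (a - 1) r"
  using gbinomial_sum_lower_neg[of a r] by (simp add: ctil_def mult.commute)

lemma ctil_pos: "a < 0 \<Longrightarrow> 0 < ctil a r"
  by (induction r) (simp_all add: ctil_Suc)

lemma ctil_antimono:
  assumes "-1 \<le> a" "a < 0" "i \<le> j"
  shows "ctil a j \<le> ctil a i"
proof -
  have "decseq (ctil a)"
  proof (rule decseq_SucI)
    fix r
    have "(real r - a) / (real r + 1) \<le> 1"
      using assms by simp
    then show "ctil a (Suc r) \<le> ctil a r"
      using ctil_pos[OF assms(2), of r] unfolding ctil_Suc
      by (metis mult_left_le times_divide_eq_right less_imp_le)
  qed
  then show ?thesis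
    using assms(3) by (simp add: decseqD)
qed

lemma ctil_nonpos:
  assumes "0 < a" "a < 1" "0 < r"
  shows "ctil a r \<le> 0"
proof -
  obtain s where "r = Suc s"
    using assms(3) gr0_implies_Suc by blast
  then show ?thesis
    using ctil_pos[of "a - 1" s] assms by (simp add: ctil_Suc_absorb divide_nonpos_pos)
qed

lemma fps_ctil_mult: "Abs_fps (ctil a) * Abs_fps (ctil b) = Abs_fps (ctil (a + b))"
proof (rule fps_ext)
  fix m
  have "(\<Sum>i=0..m. ctil a i * ctil b (m - i)) = (-1) ^ m * (\<Sum>i=0..m. (a gchoose i) * (b gchoose (m - i)))"
    unfolding sum_distrib_left
    by (intro sum.cong) (auto simp: ctil_def algebra_simps simp flip: power_add)
  then show "fps_nth (Abs_fps (ctil a) * Abs_fps (ctil b)) m = fps_nth (Abs_fps (ctil (a + b))) m"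
    by (simp add: fps_mult_nth gbinomial_Vandermonde ctil_def)
qed

lemma inverse_fps_ctil: "inverse (Abs_fps (ctil a)) = Abs_fps (ctil (- a))"
proof (rule fps_inverse_unique)
  show "Abs_fps (ctil a) * Abs_fps (ctil (- a)) = 1"
    by (rule fps_ext) (simp add: fps_ctil_mult ctil_def gbinomial_0_left)
qed

lemma one_plus_mul_le_powr:
  fixes x d :: real
  assumes "0 < x" "0 \<le> d"
  shows "1 + d * (1 - 1 / x) \<le> x powr d"
proof -
  have "ln (1 / x) \<le> 1 / x - 1"
    using assms(1) by (intro ln_le_minus_one) simp
  then have "1 - 1 / x \<le> ln x"
    using assms(1) by (simp add: ln_div)
  then have "1 + d * (1 - 1 / x) \<le> 1 + d * ln x"
    using assms(2) by (simp add: mult_left_mono)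
  also have "\<dots> \<le> exp (d * ln x)"
    by (rule exp_ge_add_one_self)
  finally show ?thesis
    using assms(1) by (simp add: powr_def)
qed

lemma powr_le_one_plus_mul:
  fixes x d :: real
  assumes "0 \<le> x" "0 \<le> d" "d \<le> 1"
  shows "(1 + x) powr d \<le> 1 + d * x"
  using Youngs_inequality_0[of d "1 - d" "1 + x" 1] assms by (simp add: algebra_simps)

lemma ctil_pred_Suc: "ctil (g - 1) (Suc r) = ctil (g - 1) r * (real r + (1 - g)) / (real r + 1)"
  by (simp add: ctil_Suc algebra_simps)

lemma ctil_pred_lower:
  assumes "0 < g" "g < 1" "1 \<le> r"
  shows "(1 - g) * real r powr (1 - g) \<le> real r * ctil (g - 1) r"
  using assms(3)
proof (induction r rule: dec_induct)
  case base
  then show ?case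
    by (simp add: ctil_pred_Suc[of g 0, simplified])
next
  case (step r)
  define d where "d = 1 - g"
  have d: "0 < d" "d < 1" "0 \<le> ctil (g - 1) r"
    using assms ctil_pos[of "g - 1" r] by (auto simp: d_def)
  have r: "real r \<ge> 1"
    using step by simp
  have "real r + 1 = real r * (1 + 1 / real r)"
    using r by (simp add: field_simps)
  then have "(real r + 1) powr d = real r powr d * (1 + 1 / real r) powr d"
    using r by (simp add: powr_mult)
  also have "\<dots> \<le> real r powr d * (1 + d / real r)"
    using powr_le_one_plus_mul[of "1 / real r" d] d r by (intro mult_left_mono) auto
  finally have "d * (real r + 1) powr d \<le> (d * real r powr d) * (1 + d / real r)"
    using d by (simp add: mult_left_mono mult.assoc)
  also have "\<dots> \<le> (real r * ctil (g - 1) r) * (1 + d / real r)"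
    using step.IH d r by (intro mult_right_mono) (auto simp: d_def)
  also have "\<dots> = real (Suc r) * ctil (g - 1) (Suc r)"
    using r by (simp add: ctil_pred_Suc d_def field_simps)
  finally show ?case
    by (simp add: d_def add.commute)
qed

text \<open>The shift to \<open>r - 1\<close> on the right is what makes the induction step go through.\<close>

lemma ctil_pred_upper_shifted:
  assumes "0 < g" "g < 1" "2 \<le> r"
  shows "real r * ctil (g - 1) r \<le> 2 * (1 - g) * (real r - 1) powr (1 - g)"
  using assms(3)
proof (induction r rule: dec_induct)
  case base
  have "2 * ctil (g - 1) 2 = (1 - g) * (2 - g)"
    using ctil_pred_Suc[of g 1] by (simp add: numeral_2_eq_2 ctil_pred_Suc[of g 0, simplified] field_simps)
  then show ?case
    using assms(1,2) mult_left_mono[of "2 - g" 2 "1 - g"] by simp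
next
  case (step r)
  define d where "d = 1 - g"
  have d: "0 < d" "d < 1"
    using assms by (auto simp: d_def)
  have r: "real r \<ge> 2"
    using step by simp
  have "real (Suc r) * ctil (g - 1) (Suc r) = (real r * ctil (g - 1) r) * (1 + d / real r)"
    using r by (simp add: ctil_pred_Suc d_def field_simps)
  also have "\<dots> \<le> (2 * d * (real r - 1) powr d) * (1 + d / real r)"
    using step.IH d r by (intro mult_right_mono) (auto simp: d_def)
  also have "\<dots> \<le> 2 * d * ((real r - 1) powr d * (real r / (real r - 1)) powr d)"
  proof -
    have "1 + d / real r \<le> (real r / (real r - 1)) powr d"
      using one_plus_mul_le_powr[of "real r / (real r - 1)" d] d r by (simp add: field_simps)
    then show ?thesis
      using d by (simp add: mult_left_mono)
  qed
  also have "\<dots> = 2 * d * real r powr d"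
    using r by (simp add: powr_divide)
  finally show ?case
    by (simp add: d_def)
qed

lemma ctil_pred_upper:
  assumes "0 < g" "g < 1" "1 \<le> r"
  shows "real r * ctil (g - 1) r \<le> 2 * (1 - g) * real r powr (1 - g)"
proof (cases "r = 1")
  case True
  then show ?thesis
    using assms by (simp add: ctil_pred_Suc[of g 0, simplified])
next
  case False
  then have "real r * ctil (g - 1) r \<le> 2 * (1 - g) * (real r - 1) powr (1 - g)"
    using assms by (intro ctil_pred_upper_shifted) auto
  also have "\<dots> \<le> 2 * (1 - g) * real r powr (1 - g)"
    using assms by (intro mult_left_mono powr_mono2) auto
  finally show ?thesis .
qed

lemma ctil_neg_upper:
  assumes "0 < g" "g < 1"
  shows "ctil (- g) m * (real m + 1) powr (1 - g) \<le> 1"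
proof (induction m)
  case (Suc m)
  define d where "d = 1 - g"
  have d: "0 < d" "d < 1" "0 < ctil (- g) m"
    using assms ctil_pos[of "- g" m] by (auto simp: d_def)
  have "ctil (- g) (Suc m) * (real (Suc m) + 1) powr d
      = ctil (- g) m * ((1 - d / (real m + 1)) * (real m + 2) powr d)"
    by (simp add: ctil_Suc d_def field_simps)
  also have "\<dots> \<le> ctil (- g) m * (((real m + 1) / (real m + 2)) powr d * (real m + 2) powr d)"
    using one_plus_mul_le_powr[of "(real m + 1) / (real m + 2)" d] d
    by (intro mult_left_mono mult_right_mono) (auto simp: field_simps)
  also have "\<dots> = ctil (- g) m * (real m + 1) powr d"
    by (simp add: powr_divide)
  finally show ?case
    using Suc by (simp add: d_def)
qed simp

lemma ctil_pred_sq_le: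
  assumes "0 < g" "g < 1" "1 \<le> m"
  shows "(ctil (g - 1) m)^2 \<le> 4 * (1 - g)^2 * real m powr (2 * (1 - g)) / (real m)^2"
proof -
  have "0 \<le> real m * ctil (g - 1) m"
    using ctil_pos[of "g - 1" m] assms by simp
  with ctil_pred_upper[OF assms]
  have "(real m * ctil (g - 1) m)^2 \<le> (2 * (1 - g) * real m powr (1 - g))^2"
    by (rule power_mono)
  also have "\<dots> = 4 * (1 - g)^2 * real m powr (2 * (1 - g))"
    using assms by (simp only: power_mult_distrib powr_power) simp
  finally show ?thesis
    using assms by (simp add: field_simps)
qed

lemma ctil_pred_sq_le_powr:
  assumes "0 < g" "g < 1" "1 \<le> m" "m \<le> p"
  shows "(ctil (g - 1) m)^2 \<le> 4 * (1 - g)^2 * real p powr (2 * (1 - g)) / (real m)^2"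
proof -
  have "(ctil (g - 1) m)^2 \<le> 4 * (1 - g)^2 * real m powr (2 * (1 - g)) / (real m)^2"
    using ctil_pred_sq_le[OF assms(1-3)] .
  also have "\<dots> \<le> 4 * (1 - g)^2 * real p powr (2 * (1 - g)) / (real m)^2"
    using assms by (intro divide_right_mono mult_left_mono powr_mono2) auto
  finally show ?thesis .
qed

lemma ctil_neg_sq_le:
  assumes "0 < g" "g < 1"
  shows "(ctil (- g) m)^2 * (real m + 1) powr (2 * (1 - g)) \<le> 1"
proof -
  have "0 \<le> ctil (- g) m * (real m + 1) powr (1 - g)"
    using ctil_pos[of "- g" m] assms by simp
  then have "(ctil (- g) m * (real m + 1) powr (1 - g))^2 \<le> 1"
    using ctil_neg_upper[OF assms, of m] by (simp add: power_le_one)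
  then show ?thesis
    by (simp add: power_mult_distrib powr_power)
qed

lemma ctil_pred_last_lower:
  assumes "0 < g" "g < 1" "2 \<le> p"
  shows "(1 - g) * real p powr (1 - g) \<le> 2 * real p * ctil (g - 1) (p - 1)"
proof -
  define q where "q = p - 1"
  have q: "1 \<le> q" "real p \<le> 2 * real q" "real q \<le> real p"
    using assms(3) by (auto simp: q_def)
  have "real p powr (1 - g) \<le> (2 * real q) powr (1 - g)"
    using q assms by (intro powr_mono2) auto
  also have "\<dots> = 2 powr (1 - g) * real q powr (1 - g)"
    by (simp add: powr_mult)
  also have "\<dots> \<le> 2 * real q powr (1 - g)"
    using assms powr_mono[of "1 - g" 1 2] by (intro mult_right_mono) auto
  finally have "(1 - g) * real p powr (1 - g) \<le> 2 * ((1 - g) * real q powr (1 - g))"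
    using assms by (simp add: mult_left_mono)
  also have "\<dots> \<le> 2 * (real q * ctil (g - 1) q)"
    using ctil_pred_lower[OF assms(1,2) q(1)] by simp
  also have "\<dots> \<le> 2 * (real p * ctil (g - 1) q)"
    using q ctil_pos[of "g - 1" q] assms by (intro mult_left_mono mult_right_mono) auto
  finally show ?thesis
    by (simp add: q_def)
qed

lemma ctil_neg_last_upper:
  assumes "0 < g" "g < 1"
  shows "ctil (- g) p * real p powr (1 - g) \<le> 1"
proof -
  have "ctil (- g) p * real p powr (1 - g) \<le> ctil (- g) p * (real p + 1) powr (1 - g)"
    using assms ctil_pos[of "- g" p] by (intro mult_left_mono powr_mono2) auto
  also have "\<dots> \<le> 1"
    by (rule ctil_neg_upper[OF assms])
  finally show ?thesis .
qed

section \<open>Inverse of the truncated series\<close>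

lemma inverse_fps_nth_rec:
  fixes f :: "real fps"
  assumes "fps_nth f 0 = 1" "0 < m"
  shows "fps_nth (inverse f) m = (\<Sum>i=1..m. - fps_nth f i * fps_nth (inverse f) (m - i))"
  using assms by (simp add: fps_inverse_def fps_right_inverse_constructor_rec sum_negf)

lemma inverse_fps_nth_nonneg:
  fixes f :: "real fps"
  assumes "fps_nth f 0 = 1" "\<And>i. 0 < i \<Longrightarrow> fps_nth f i \<le> 0"
  shows "0 \<le> fps_nth (inverse f) m"
proof (induction m rule: less_induct)
  case (less m)
  show ?case
  proof (cases "m = 0")
    case False
    then show ?thesis
      using less assms by (auto simp: inverse_fps_nth_rec intro!: sum_nonneg mult_nonpos_nonneg)
  qed (use assms in simp)
qed

lemma inverse_fps_nth_mono:
  fixes f h :: "real fps"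
  assumes "fps_nth f 0 = 1" "fps_nth h 0 = 1"
    and "\<And>i. 0 < i \<Longrightarrow> fps_nth h i \<le> fps_nth f i" "\<And>i. 0 < i \<Longrightarrow> fps_nth f i \<le> 0"
  shows "fps_nth (inverse f) m \<le> fps_nth (inverse h) m"
proof (induction m rule: less_induct)
  case (less m)
  show ?case
  proof (cases "m = 0")
    case False
    have "(\<Sum>i=1..m. - fps_nth f i * fps_nth (inverse f) (m - i))
        \<le> (\<Sum>i=1..m. - fps_nth h i * fps_nth (inverse h) (m - i))"
      using less assms inverse_fps_nth_nonneg[OF assms(1,4)] order_trans[OF assms(3,4)]
      by (intro sum_mono mult_mono) auto
    then show ?thesis
      using False assms by (simp add: inverse_fps_nth_rec)
  qed (use assms in simp)
qed

lemma sum_inverse_fps_nth_le: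
  fixes f :: "real fps"
  assumes "fps_nth f 0 = 1" "\<And>i. 0 < i \<Longrightarrow> fps_nth f i \<le> 0"
    and "0 < s" "\<And>N. s \<le> (\<Sum>i\<le>N. fps_nth f i)"
  shows "(\<Sum>m<N. fps_nth (inverse f) m) \<le> 1 / s"
proof (cases "N = 0")
  case False
  \<comment> \<open>Sum \<open>inverse f * f = 1\<close> up to degree \<open>N - 1\<close>: each coefficient of \<open>inverse f\<close> meets a partial sum of \<open>f\<close>.\<close>
  define a where "a = fps_nth (inverse f)"
  have "s * (\<Sum>m<N. a m) = (\<Sum>i<N. a i * s)"
    by (simp add: sum_distrib_left mult.commute)
  also have "\<dots> \<le> (\<Sum>i<N. a i * (\<Sum>j<N - i. fps_nth f j))"
  proof (intro sum_mono mult_left_mono)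
    fix i
    assume "i \<in> {..<N}"
    then have "{..<N - i} = {..N - i - 1}"
      by auto
    then show "s \<le> (\<Sum>j<N - i. fps_nth f j)"
      using assms(4) by simp
  qed (simp add: a_def inverse_fps_nth_nonneg[OF assms(1,2)])
  also have "\<dots> = (\<Sum>i<N. \<Sum>j<N - i. a i * fps_nth f j)"
    by (simp add: sum_distrib_left)
  also have "\<dots> = (\<Sum>(i, j)\<in>{(i, j). i + j < N}. a i * fps_nth f j)"
  proof -
    have "Sigma {..<N} (\<lambda>i. {..<N - i}) = {(i, j). i + j < N}"
      by auto
    then show ?thesis
      by (metis (no_types) finite_lessThan sum.Sigma)
  qed
  also have "\<dots> = (\<Sum>m<N. fps_nth (inverse f * f) m)"
    unfolding sum.triangle_reindex by (simp add: a_def fps_mult_nth atMost_atLeast0)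
  also have "\<dots> = 1"
    using assms(1) False by (simp add: inverse_mult_eq_1)
  finally show ?thesis
    using assms(3) by (simp add: a_def field_simps)
qed (use assms(3) in simp)

definition band_fps :: "real \<Rightarrow> nat \<Rightarrow> real fps" where
  "band_fps g p = fps_cutoff p (Abs_fps (ctil g))"

lemma band_fps_nth: "fps_nth (band_fps g p) r = (if r < p then ctil g r else 0)"
  by (simp add: band_fps_def)

lemma band_fps_nth_nonpos:
  assumes "0 < g" "g < 1" "0 < i"
  shows "fps_nth (band_fps g p) i \<le> 0"
  using ctil_nonpos[OF assms] by (simp add: band_fps_nth)

lemma sum_band_fps_nth:
  assumes "1 \<le> p"
  shows "(\<Sum>i\<le>N. fps_nth (band_fps g p) i) = ctil (g - 1) (min N (p - 1))"
proof -
  have "(\<Sum>i\<le>N. fps_nth (band_fps g p) i) = (\<Sum>i\<le>min N (p - 1). ctil g i)"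
    using assms by (intro sum.mono_neutral_cong_right) (auto simp: band_fps_nth)
  then show ?thesis
    by (simp add: sum_ctil_atMost)
qed

lemma inverse_band_fps_nonneg:
  assumes "0 < g" "g < 1" "1 \<le> p"
  shows "0 \<le> fps_nth (inverse (band_fps g p)) m"
  using assms by (intro inverse_fps_nth_nonneg) (auto simp: band_fps_nth ctil_nonpos)

lemma inverse_band_fps_eq:
  assumes "m < p"
  shows "fps_nth (inverse (band_fps g p)) m = ctil (- g) m"
proof -
  have "fps_cutoff p (inverse (band_fps g p)) = fps_cutoff p (inverse (Abs_fps (ctil g)))"
    unfolding band_fps_def by (rule fps_cutoff_inverse) simp
  then have "fps_nth (fps_cutoff p (inverse (band_fps g p))) m = fps_nth (inverse (Abs_fps (ctil g))) m"
    using assms by simp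
  then show ?thesis
    using assms by (simp add: inverse_fps_ctil)
qed

lemma inverse_band_fps_le:
  assumes "0 < g" "g < 1" "1 \<le> p"
  shows "fps_nth (inverse (band_fps g p)) m \<le> ctil (- g) m"
proof -
  have "fps_nth (inverse (band_fps g p)) m \<le> fps_nth (inverse (Abs_fps (ctil g))) m"
    using assms ctil_nonpos[OF assms(1,2)]
    by (intro inverse_fps_nth_mono) (auto simp: band_fps_nth band_fps_nth_nonpos)
  then show ?thesis
    by (simp add: inverse_fps_ctil)
qed

lemma inverse_band_fps_antimono:
  assumes "0 < g" "g < 1" "1 \<le> p" "i \<le> j"
  shows "fps_nth (inverse (band_fps g p)) j \<le> fps_nth (inverse (band_fps g p)) i"
proof -
  define a where "a = fps_nth (inverse (band_fps g p))"
  have f0: "fps_nth (band_fps g p) 0 = 1"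
    using assms by (simp add: band_fps_nth)
  have "a (Suc m) \<le> a m" for m
  proof (induction m rule: less_induct)
    case (less m)
    show ?case
    proof (cases "Suc m < p")
      case True
      then show ?thesis
        using ctil_antimono[of "- g" m "Suc m"] assms by (simp add: a_def inverse_band_fps_eq)
    next
      case False
      \<comment> \<open>Beyond the band the recursion for \<open>a (Suc m)\<close> is that of \<open>a m\<close> with shifted arguments.\<close>
      have "a (Suc m) = (\<Sum>i=1..m. - fps_nth (band_fps g p) i * a (Suc m - i))"
        using False f0 by (simp add: a_def inverse_fps_nth_rec band_fps_nth)
      also have "\<dots> \<le> (\<Sum>i=1..m. - fps_nth (band_fps g p) i * a (m - i))"
        using less band_fps_nth_nonpos[OF assms(1,2)]
        by (intro sum_mono mult_left_mono) (auto simp: Suc_diff_le)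
      also have "\<dots> \<le> a m"
        using inverse_band_fps_nonneg[OF assms(1-3)] f0
        by (cases "m = 0") (simp_all add: a_def inverse_fps_nth_rec)
      finally show ?thesis .
    qed
  qed
  then show ?thesis
    using assms(4) by (simp add: a_def decseqD decseq_SucI)
qed

lemma sum_inverse_band_fps_le:
  assumes "0 < g" "g < 1" "1 \<le> p"
  shows "(\<Sum>m<N. fps_nth (inverse (band_fps g p)) m) \<le> 1 / ctil (g - 1) (p - 1)"
proof (rule sum_inverse_fps_nth_le)
  show "0 < ctil (g - 1) (p - 1)"
    using assms by (intro ctil_pos) simp
  show "ctil (g - 1) (p - 1) \<le> (\<Sum>i\<le>M. fps_nth (band_fps g p) i)" for M
    using assms by (simp add: sum_band_fps_nth ctil_antimono)
qed (use assms in \<open>simp_all add: band_fps_nth ctil_nonpos\<close>)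

section \<open>Lower-triangular Toeplitz matrices\<close>

definition lower_toeplitz :: "nat \<Rightarrow> real fps \<Rightarrow> nat \<Rightarrow> nat \<Rightarrow> real" where
  "lower_toeplitz n F i j = (if i < n \<and> j < n \<and> j \<le> i then fps_nth F (i - j) else 0)"

lemma mat_mul_cong:
  assumes "\<And>l. l < n \<Longrightarrow> A i l = A' i l" "\<And>l. l < n \<Longrightarrow> B l j = B' l j"
  shows "mat_mul n A B i j = mat_mul n A' B' i j"
  using assms by (simp add: mat_mul_def)

lemma mat_mul_lower_toeplitz:
  assumes "i < n" "j < n"
  shows "mat_mul n (lower_toeplitz n F) (lower_toeplitz n G) i j = lower_toeplitz n (F * G) i j"
proof (cases "j \<le> i")
  case True
  have "mat_mul n (lower_toeplitz n F) (lower_toeplitz n G) i j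
      = (\<Sum>l=j..i. fps_nth F (i - l) * fps_nth G (l - j))"
    unfolding mat_mul_def lower_toeplitz_def using assms
    by (intro sum.mono_neutral_cong_right) auto
  also have "\<dots> = (\<Sum>t=0..i-j. fps_nth F t * fps_nth G (i - j - t))"
    by (rule sum.reindex_bij_witness [where i = "\<lambda>t. i - t" and j = "\<lambda>l. i - l"])
      (use True in auto)
  also have "\<dots> = lower_toeplitz n (F * G) i j"
    using assms True by (simp add: lower_toeplitz_def fps_mult_nth)
  finally show ?thesis .
next
  case False
  then show ?thesis
    unfolding mat_mul_def lower_toeplitz_def by (auto intro!: sum.neutral)
qed

lemma lower_toeplitz_one: "i < n \<Longrightarrow> j < n \<Longrightarrow> lower_toeplitz n 1 i j = (if i = j then 1 else 0)"
  by (simp add: lower_toeplitz_def)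

lemma mat_mul_inverse_unique:
  assumes "\<And>i j. n \<le> i \<or> n \<le> j \<Longrightarrow> C i j = 0" "\<And>i j. n \<le> i \<or> n \<le> j \<Longrightarrow> D i j = 0"
    and "\<And>i j. i < n \<Longrightarrow> j < n \<Longrightarrow> mat_mul n C A i j = (if i = j then 1 else 0)"
    and "\<And>i j. i < n \<Longrightarrow> j < n \<Longrightarrow> mat_mul n A D i j = (if i = j then 1 else 0)"
  shows "C = D"
proof (intro ext)
  fix i j
  show "C i j = D i j"
  proof (cases "i < n \<and> j < n")
    case True
    have "C i j = (\<Sum>l<n. C i l * (if l = j then 1 else 0))"
      using True by (simp add: if_distrib cong: if_cong)
    also have "\<dots> = (\<Sum>l<n. C i l * (\<Sum>m<n. A l m * D m j))"
      using True assms(4) by (simp add: mat_mul_def)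
    also have "\<dots> = (\<Sum>m<n. (\<Sum>l<n. C i l * A l m) * D m j)"
      unfolding sum_distrib_left sum_distrib_right mult.assoc by (rule sum.swap)
    also have "\<dots> = (\<Sum>m<n. (if i = m then 1 else 0) * D m j)"
      using True assms(3) by (simp add: mat_mul_def)
    also have "\<dots> = D i j"
      using True by (simp add: if_distrib [of "\<lambda>x. x * _"] cong: if_cong)
    finally show ?thesis .
  qed (use assms(1,2) in auto)
qed

lemma strat_inv_eq_lower_toeplitz:
  "i < n \<Longrightarrow> j < n \<Longrightarrow> strat_inv g p i j = lower_toeplitz n (band_fps g p) i j"
  by (simp add: strat_inv_def lower_toeplitz_def band_fps_nth)

lemma strat_eq_lower_toeplitz:
  assumes "1 \<le> p"
  shows "strat g p n = lower_toeplitz n (inverse (band_fps g p))"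
proof -
  define A where "A = lower_toeplitz n (band_fps g p)"
  define T where "T = lower_toeplitz n (inverse (band_fps g p))"
  have band0: "fps_nth (band_fps g p) 0 \<noteq> 0"
    using assms by (simp add: band_fps_nth)
  have left: "mat_mul n C (strat_inv g p) i j = mat_mul n C A i j"
    and right: "mat_mul n (strat_inv g p) C i j = mat_mul n A C i j"
    if "i < n" "j < n" for C i j
    using that by (auto intro!: mat_mul_cong simp: A_def strat_inv_eq_lower_toeplitz)
  have TA: "mat_mul n T A i j = (if i = j then 1 else 0)"
    and AT: "mat_mul n A T i j = (if i = j then 1 else 0)" if "i < n" "j < n" for i j
    using that band0 unfolding A_def T_def
    by (simp_all add: mat_mul_lower_toeplitz lower_toeplitz_one inverse_mult_eq_1 inverse_mult_eq_1')
  show ?thesis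
    unfolding strat_def T_def [symmetric]
  proof (rule the_equality)
    fix C
    assume "(\<forall>i j. (n \<le> i \<or> n \<le> j) \<longrightarrow> C i j = 0) \<and>
      (\<forall>i<n. \<forall>j<n. mat_mul n (strat_inv g p) C i j = (if i = j then 1 else 0)) \<and>
      (\<forall>i<n. \<forall>j<n. mat_mul n C (strat_inv g p) i j = (if i = j then 1 else 0))"
    then show "C = T"
      using left AT by (intro mat_mul_inverse_unique[where A = A]) (auto simp: T_def lower_toeplitz_def)
  qed (use left right TA AT in \<open>auto simp: T_def lower_toeplitz_def\<close>)
qed

lemma Bmat_eq_lower_toeplitz:
  assumes "i < n" "j < n"
  shows "Bmat g p n i j = lower_toeplitz n (Abs_fps (\<lambda>_. 1) * band_fps g p) i j"
proof -
  have "Bmat g p n i j = mat_mul n (lower_toeplitz n (Abs_fps (\<lambda>_. 1))) (lower_toeplitz n (band_fps g p)) i j"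
    unfolding Bmat_def using assms
    by (intro mat_mul_cong) (auto simp: Emat_def lower_toeplitz_def strat_inv_eq_lower_toeplitz)
  then show ?thesis
    using assms by (simp add: mat_mul_lower_toeplitz)
qed

lemma partial_sums_band_fps_nth:
  assumes "1 \<le> p"
  shows "fps_nth (Abs_fps (\<lambda>_. 1) * band_fps g p) m = ctil (g - 1) (min m (p - 1))"
  using sum_band_fps_nth[OF assms, where N = m]
  by (simp add: mult.commute[of "Abs_fps (\<lambda>_. 1)"] fps_mult_nth atMost_atLeast0)

lemma sum_lower_toeplitz_row:
  assumes "h 0 = 0" "i < n"
  shows "(\<Sum>j<n. h (lower_toeplitz n F i j)) = (\<Sum>m\<le>i. h (fps_nth F m))"
proof -
  have "(\<Sum>j<n. h (lower_toeplitz n F i j)) = (\<Sum>j\<le>i. h (fps_nth F (i - j)))"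
    using assms by (intro sum.mono_neutral_cong_right) (auto simp: lower_toeplitz_def)
  also have "\<dots> = (\<Sum>m\<le>i. h (fps_nth F m))"
    by (rule sum.reindex_bij_witness [where i = "\<lambda>m. i - m" and j = "\<lambda>j. i - j"]) auto
  finally show ?thesis .
qed

lemma sum_lower_toeplitz_col:
  assumes "h 0 = 0"
  shows "(\<Sum>i<n. h (lower_toeplitz n F i c)) = (\<Sum>m<n - c. h (fps_nth F m))"
proof -
  have "(\<Sum>i<n. h (lower_toeplitz n F i c)) = (\<Sum>i\<in>{c..<n}. h (fps_nth F (i - c)))"
    using assms by (intro sum.mono_neutral_cong_right) (auto simp: lower_toeplitz_def)
  also have "\<dots> = (\<Sum>m<n - c. h (fps_nth F m))"
    by (rule sum.reindex_bij_witness [where i = "\<lambda>m. m + c" and j = "\<lambda>i. i - c"]) auto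
  finally show ?thesis .
qed

lemma frob_lower_toeplitz_sq_le:
  "(frob n (lower_toeplitz n F))^2 \<le> real n * (\<Sum>m<n. (fps_nth F m)^2)"
proof -
  have "(frob n (lower_toeplitz n F))^2 = (\<Sum>i<n. \<Sum>j<n. (lower_toeplitz n F i j)^2)"
    unfolding frob_def by (simp add: sum_nonneg)
  also have "\<dots> = (\<Sum>i<n. \<Sum>m\<le>i. (fps_nth F m)^2)"
    by (intro sum.cong refl sum_lower_toeplitz_row) auto
  also have "\<dots> \<le> (\<Sum>i<n. \<Sum>m<n. (fps_nth F m)^2)"
    by (intro sum_mono sum_mono2) auto
  finally show ?thesis
    by simp
qed

lemma sum_strided_le:
  fixes f :: "nat \<Rightarrow> real"
  assumes "antimono f" "j * b \<le> i"
  shows "real b * (\<Sum>j'<j. f (i - j' * b)) \<le> (\<Sum>l=i + 1 - j * b..<i + 1. f l)"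
  using assms(2)
proof (induction j)
  case (Suc j)
  have jb: "j * b \<le> i"
    using Suc.prems by simp
  \<comment> \<open>Each term \<open>f (i - j * b)\<close> is dominated by the \<open>b\<close> terms of the block just below it.\<close>
  have "f (i - j * b) \<le> f l" if "l \<in> {i + 1 - Suc j * b..<i + 1 - j * b}" for l
    using that Suc.prems by (intro antimonoD [OF assms(1)]) (simp, linarith)
  then have "real b * f (i - j * b) \<le> (\<Sum>l=i + 1 - Suc j * b..<i + 1 - j * b. f l)"
    using sum_bounded_below[of "{i + 1 - Suc j * b..<i + 1 - j * b}" "f (i - j * b)" f] Suc.prems
    by simp
  moreover have "(\<Sum>l=i + 1 - Suc j * b..<i + 1 - j * b. f l) + (\<Sum>l=i + 1 - j * b..<i + 1. f l)
      = (\<Sum>l=i + 1 - Suc j * b..<i + 1. f l)"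
    using Suc.prems by (intro sum.atLeastLessThan_concat) auto
  ultimately show ?case
    using Suc.IH[OF jb] by (simp add: algebra_simps)
qed simp

lemma sum_square_eq_diag_plus_cross:
  fixes a :: "nat \<Rightarrow> real"
  shows "(\<Sum>j<k. a j)^2 = (\<Sum>j<k. (a j)^2) + 2 * (\<Sum>j<k. a j * (\<Sum>j'<j. a j'))"
  by (induction k) (simp_all add: power2_eq_square algebra_simps sum_distrib_left)

lemma sum_lower_toeplitz_strided_le:
  assumes "1 \<le> b" "\<And>m. 0 \<le> fps_nth F m" "antimono (fps_nth F)" "j * b \<le> i" "i < n"
  shows "(\<Sum>j'<j. lower_toeplitz n F i (j' * b)) \<le> (\<Sum>m<n. fps_nth F m) / real b"
proof -
  have "(\<Sum>j'<j. lower_toeplitz n F i (j' * b)) = (\<Sum>j'<j. fps_nth F (i - j' * b))"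
  proof (intro sum.cong refl)
    fix j'
    assume "j' \<in> {..<j}"
    then have "j' * b \<le> j * b"
      by simp
    then have "j' * b \<le> i"
      using assms(4) by linarith
    then show "lower_toeplitz n F i (j' * b) = fps_nth F (i - j' * b)"
      using assms(5) by (simp add: lower_toeplitz_def)
  qed
  also have "\<dots> \<le> (\<Sum>l=i + 1 - j * b..<i + 1. fps_nth F l) / real b"
    using sum_strided_le[OF assms(3,4)] assms(1) by (simp add: field_simps)
  also have "\<dots> \<le> (\<Sum>m<n. fps_nth F m) / real b"
    using assms(2,5) by (intro divide_right_mono sum_mono2) auto
  finally show ?thesis .
qed

lemma sens_lower_toeplitz_sq_le:
  assumes "1 \<le> b" "\<And>m. 0 \<le> fps_nth F m" "antimono (fps_nth F)"
  shows "(sens n k b (lower_toeplitz n F))^2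
    \<le> real k * (\<Sum>m<n. (fps_nth F m)^2) + 2 * real k * (\<Sum>m<n. fps_nth F m)^2 / real b"
proof -
  define a where "a i j = lower_toeplitz n F i (j * b)" for i j
  define S where "S = (\<Sum>m<n. fps_nth F m)"
  define Q where "Q = (\<Sum>m<n. (fps_nth F m)^2)"
  have a0: "0 \<le> a i j" for i j
    using assms(2) by (simp add: a_def lower_toeplitz_def)
  have S0: "0 \<le> S"
    using assms(2) by (simp add: S_def sum_nonneg)
  have cross: "a i j * (\<Sum>j'<j. a i j') \<le> a i j * (S / real b)" for i j
  proof (cases "j * b \<le> i \<and> i < n")
    case True
    then have "(\<Sum>j'<j. a i j') \<le> S / real b"
      unfolding a_def S_def by (intro sum_lower_toeplitz_strided_le[OF assms]) auto
    then show ?thesis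
      using a0 by (rule mult_left_mono)
  next
    case False
    then show ?thesis
      by (auto simp: a_def lower_toeplitz_def)
  qed
  have col_sq: "(\<Sum>i<n. (a i j)^2) \<le> Q" for j
    unfolding a_def Q_def sum_lower_toeplitz_col[where h = power2, simplified]
    by (intro sum_mono2) auto
  have col: "(\<Sum>i<n. a i j) \<le> S" for j
    unfolding a_def S_def sum_lower_toeplitz_col[where h = id, simplified]
    using assms(2) by (intro sum_mono2) auto
  have "(sens n k b (lower_toeplitz n F))^2 = (\<Sum>i<n. (\<Sum>j<k. a i j)^2)"
    unfolding sens_def a_def by (simp add: sum_nonneg)
  also have "\<dots> = (\<Sum>j<k. \<Sum>i<n. (a i j)^2) + 2 * (\<Sum>i<n. \<Sum>j<k. a i j * (\<Sum>j'<j. a i j'))"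
    unfolding sum_square_eq_diag_plus_cross by (simp add: sum.distrib sum_distrib_left sum.swap [of _ "{..<k}"])
  also have "\<dots> \<le> (\<Sum>j<k. Q) + 2 * (\<Sum>i<n. \<Sum>j<k. a i j * (S / real b))"
    using col_sq cross by (intro add_mono mult_left_mono [where c = 2] sum_mono) auto
  also have "(\<Sum>i<n. \<Sum>j<k. a i j * (S / real b)) = (\<Sum>j<k. \<Sum>i<n. a i j) * (S / real b)"
    unfolding sum_distrib_right by (rule sum.swap)
  also have "\<dots> \<le> (\<Sum>j<k. S) * (S / real b)"
    using col S0 assms(1) by (intro mult_right_mono sum_mono) auto
  finally show ?thesis
    by (simp add: Q_def S_def power2_eq_square)
qed

section \<open>The error of the banded factorization\<close>

definition frob_factor :: "real \<Rightarrow> nat \<Rightarrow> nat \<Rightarrow> real" where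
  "frob_factor g p n = (\<Sum>m<p. (ctil (g - 1) m)^2) + real n * (ctil (g - 1) (p - 1))^2"

definition sens_factor :: "real \<Rightarrow> nat \<Rightarrow> nat \<Rightarrow> real" where
  "sens_factor g p b = (\<Sum>m<p. (ctil (- g) m)^2) + ctil (- g) p / ctil (g - 1) (p - 1)
     + 2 / (real b * (ctil (g - 1) (p - 1))^2)"

lemma frob_factor_nonneg: "0 \<le> frob_factor g p n"
  by (simp add: frob_factor_def sum_nonneg)

lemma sens_factor_nonneg:
  assumes "0 < g" "g < 1"
  shows "0 \<le> sens_factor g p b"
  using assms ctil_pos[of "- g" p] ctil_pos[of "g - 1" "p - 1"]
  by (simp add: sens_factor_def sum_nonneg less_imp_le)

lemma frob_Bmat_sq_le:
  assumes "1 \<le> p" "p \<le> n"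
  shows "(frob n (Bmat g p n))^2 \<le> real n * frob_factor g p n"
proof -
  have "frob n (Bmat g p n) = frob n (lower_toeplitz n (Abs_fps (\<lambda>_. 1) * band_fps g p))"
    unfolding frob_def by (simp add: Bmat_eq_lower_toeplitz)
  then have "(frob n (Bmat g p n))^2 \<le> real n * (\<Sum>m<n. (ctil (g - 1) (min m (p - 1)))^2)"
    using frob_lower_toeplitz_sq_le[of n "Abs_fps (\<lambda>_. 1) * band_fps g p"]
    by (simp only: partial_sums_band_fps_nth[OF assms(1)])
  also have "(\<Sum>m<n. (ctil (g - 1) (min m (p - 1)))^2)
      \<le> (\<Sum>m<n. (if m < p then (ctil (g - 1) m)^2 else 0) + (ctil (g - 1) (p - 1))^2)"
    using assms(1) by (intro sum_mono) (auto simp: min_def)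
  also have "\<dots> = frob_factor g p n"
  proof -
    have "(\<Sum>m<n. if m < p then (ctil (g - 1) m)^2 else 0) = (\<Sum>m<p. (ctil (g - 1) m)^2)"
      using assms by (intro sum.mono_neutral_cong_right) auto
    then show ?thesis
      by (simp add: frob_factor_def sum.distrib)
  qed
  finally show ?thesis
    by (simp add: mult_left_mono)
qed

lemma sum_sq_inverse_band_fps_le:
  assumes "0 < g" "g < 1" "1 \<le> p" "p \<le> n"
  shows "(\<Sum>m<n. (fps_nth (inverse (band_fps g p)) m)^2)
    \<le> (\<Sum>m<p. (ctil (- g) m)^2) + ctil (- g) p / ctil (g - 1) (p - 1)"
proof -
  define d where "d = fps_nth (inverse (band_fps g p))"
  have d0: "0 \<le> d m" for m
    unfolding d_def by (rule inverse_band_fps_nonneg[OF assms(1-3)])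
  have e0: "0 < ctil (- g) p"
    using assms by (intro ctil_pos) simp
  have "(d m)^2 \<le> (if m < p then (ctil (- g) m)^2 else 0) + ctil (- g) p * d m" for m
  proof (cases "m < p")
    case True
    then show ?thesis
      using e0 d0[of m] by (simp add: d_def inverse_band_fps_eq)
  next
    case False
    then have "d m \<le> ctil (- g) p"
      using inverse_band_fps_antimono[OF assms(1-3), of p m] inverse_band_fps_le[OF assms(1-3), of p]
      by (simp add: d_def)
    then show ?thesis
      using False d0[of m] by (simp add: power2_eq_square mult_right_mono)
  qed
  then have "(\<Sum>m<n. (d m)^2) \<le> (\<Sum>m<n. (if m < p then (ctil (- g) m)^2 else 0) + ctil (- g) p * d m)"
    by (intro sum_mono)
  also have "\<dots> = (\<Sum>m<n. if m < p then (ctil (- g) m)^2 else 0) + ctil (- g) p * (\<Sum>m<n. d m)"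
    by (simp add: sum.distrib sum_distrib_left)
  also have "(\<Sum>m<n. if m < p then (ctil (- g) m)^2 else 0) = (\<Sum>m<p. (ctil (- g) m)^2)"
    using assms by (intro sum.mono_neutral_cong_right) auto
  also have "ctil (- g) p * (\<Sum>m<n. d m) \<le> ctil (- g) p * (1 / ctil (g - 1) (p - 1))"
    using sum_inverse_band_fps_le[OF assms(1-3)] e0 unfolding d_def by (intro mult_left_mono) auto
  finally show ?thesis
    by (simp add: d_def)
qed

lemma sens_strat_sq_le:
  assumes "0 < g" "g < 1" "1 \<le> p" "p \<le> n" "1 \<le> b"
  shows "(sens n k b (strat g p n))^2 \<le> real k * sens_factor g p b"
proof -
  define F where "F = inverse (band_fps g p)"
  define s where "s = ctil (g - 1) (p - 1)"
  have s0: "0 < s"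
    using assms unfolding s_def by (intro ctil_pos) simp
  have F0: "0 \<le> fps_nth F m" for m
    unfolding F_def by (rule inverse_band_fps_nonneg[OF assms(1-3)])
  have "(\<Sum>m<n. fps_nth F m)^2 \<le> (1 / s)^2"
    using sum_inverse_band_fps_le[OF assms(1-3)] F0 unfolding F_def s_def
    by (intro power_mono sum_nonneg) auto
  then have "2 * real k * (\<Sum>m<n. fps_nth F m)^2 / real b \<le> 2 * real k * (1 / s)^2 / real b"
    by (intro divide_right_mono mult_left_mono) auto
  moreover have "real k * (\<Sum>m<n. (fps_nth F m)^2) \<le> real k * ((\<Sum>m<p. (ctil (- g) m)^2) + ctil (- g) p / s)"
    using sum_sq_inverse_band_fps_le[OF assms(1-4)] unfolding F_def s_def by (intro mult_left_mono) auto
  moreover have "(sens n k b (strat g p n))^2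
      \<le> real k * (\<Sum>m<n. (fps_nth F m)^2) + 2 * real k * (\<Sum>m<n. fps_nth F m)^2 / real b"
    unfolding strat_eq_lower_toeplitz[OF assms(3)] F_def
    using assms inverse_band_fps_nonneg inverse_band_fps_antimono
    by (intro sens_lower_toeplitz_sq_le) (auto intro: antimonoI)
  ultimately show ?thesis
    unfolding sens_factor_def s_def [symmetric] by (simp add: field_simps power2_eq_square)
qed

lemma rmse_strat_sq_le:
  assumes "0 < g" "g < 1" "1 \<le> p" "p \<le> n" "1 \<le> b"
  shows "(rmse n k b (Bmat g p n) (strat g p n))^2 \<le> real k * frob_factor g p n * sens_factor g p b"
proof -
  have n: "0 < real n"
    using assms by simp
  have "(rmse n k b (Bmat g p n) (strat g p n))^2 = (frob n (Bmat g p n))^2 * (sens n k b (strat g p n))^2 / real n"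
    unfolding rmse_def using n by (simp add: power_divide power_mult_distrib)
  also have "\<dots> \<le> (real n * frob_factor g p n) * (real k * sens_factor g p b) / real n"
    using frob_Bmat_sq_le[OF assms(3,4)] sens_strat_sq_le[OF assms] n frob_factor_nonneg
    by (intro divide_right_mono mult_mono) auto
  finally show ?thesis
    using n by (simp add: ac_simps)
qed

lemma sens_factor_le:
  assumes "0 < g" "g < 1" "2 \<le> p" "1 \<le> b"
  shows "sens_factor g p b \<le> (\<Sum>m<p. (ctil (- g) m)^2)
    + 2 * real p / ((1 - g) * real p powr (2 * (1 - g)))
    + 8 * (real p)^2 / (real b * (1 - g)^2 * real p powr (2 * (1 - g)))"
proof -
  define d where "d = 1 - g"
  define A where "A = real p powr d"
  define s where "s = ctil (g - 1) (p - 1)"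
  have pos: "0 < d" "0 < A" "0 < s" "0 < real p"
    using assms ctil_pos[of "g - 1" "p - 1"] by (auto simp: d_def A_def s_def)
  have A2: "real p powr (2 * d) = A^2"
    using pos by (simp add: A_def powr_power)
  have low: "d * A / (2 * real p) \<le> s"
    using ctil_pred_last_lower[OF assms(1-3)] pos by (simp add: d_def A_def s_def field_simps)
  have "ctil (- g) p / s \<le> (1 / A) / (d * A / (2 * real p))"
  proof (rule frac_le)
    show "ctil (- g) p \<le> 1 / A"
      using ctil_neg_last_upper[OF assms(1,2), of p] pos by (simp add: A_def d_def field_simps)
  qed (use pos low ctil_pos[of "- g" p] assms in auto)
  also have "\<dots> = 2 * real p / (d * A^2)"
    using pos by (simp add: field_simps power2_eq_square)
  finally have ratio: "ctil (- g) p / s \<le> 2 * real p / (d * A^2)" .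
  have "2 / (real b * s^2) \<le> 2 / (real b * (d * A / (2 * real p))^2)"
    using low pos assms(4) by (intro divide_left_mono mult_left_mono power_mono mult_pos_pos) auto
  also have "\<dots> = 8 * (real p)^2 / (real b * d^2 * A^2)"
    using pos by (simp add: field_simps power2_eq_square)
  finally have "2 / (real b * s^2) \<le> 8 * (real p)^2 / (real b * d^2 * A^2)" .
  with ratio show ?thesis
    unfolding sens_factor_def s_def [symmetric] d_def [symmetric] A2 by simp
qed

lemma sum_inverse_Suc_le: "1 \<le> q \<Longrightarrow> (\<Sum>m<q. 1 / (real m + 1)) \<le> 1 + ln (real q)"
  using euler_mascheroni_sequence_decreasing[of 1 q]
  by (simp add: harm_altdef harm_def inverse_eq_divide add.commute)

lemma sum_inverse_Suc_squared_le: "(\<Sum>m<q. 1 / (real m + 1)^2) \<le> 2"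
proof -
  have "(\<Sum>m<q. 1 / (real m + 1)^2) \<le> (\<Sum>m. 1 / (real m + 1)^2)"
    using inverse_squares_sums by (intro sum_le_suminf) (auto simp: sums_iff add.commute)
  also have "\<dots> = pi^2 / 6"
    using inverse_squares_sums by (simp add: sums_iff add.commute)
  also have "\<dots> \<le> 2"
  proof -
    have "pi \<le> 3.2"
      using pi_approx(2) by simp
    then have "pi * pi \<le> 3.2 * 3.2"
      using pi_gt_zero by (intro mult_mono) auto
    then show ?thesis
      by (simp add: power2_eq_square)
  qed
  finally show ?thesis .
qed

lemma sum_inverse_sqrt_Suc_le: "(\<Sum>m<q. 1 / sqrt (real m + 1)) \<le> 2 * sqrt (real q)"
proof (induction q)
  case (Suc q)
  have "sqrt (real q) * sqrt (real q + 1) \<le> (real q + (real q + 1)) / 2"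
    using arith_geo_mean_sqrt[of "real q" "real q + 1"] by (simp add: real_sqrt_mult)
  then have "1 \<le> (2 * sqrt (real q + 1) - 2 * sqrt (real q)) * sqrt (real q + 1)"
    by (simp add: algebra_simps)
  then have "1 / sqrt (real q + 1) \<le> 2 * sqrt (real q + 1) - 2 * sqrt (real q)"
    by (simp add: divide_le_eq)
  then show ?case
    using Suc by (simp add: add.commute)
qed simp

lemma le_mult_sqrt_of_sq_le:
  fixes x c y :: real
  assumes "0 \<le> c" "x^2 \<le> c^2 * y"
  shows "x \<le> c * sqrt y"
proof -
  have "x \<le> sqrt (x^2)"
    by simp
  also have "\<dots> \<le> sqrt (c^2 * y)"
    using assms(2) by (rule real_sqrt_le_mono)
  also have "\<dots> = c * sqrt y"
    using assms(1) by (simp add: real_sqrt_mult)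
  finally show ?thesis .
qed

lemma ln_nat_ge_two_thirds:
  assumes "2 \<le> p"
  shows "2/3 \<le> ln (real p)"
proof -
  have "ln 2 \<le> ln (real p)"
    using assms by simp
  then show ?thesis
    using ln2_ge_two_thirds by linarith
qed

section \<open>The regime \<open>\<gamma>\<close> near \<open>1/2\<close>\<close>

lemma powr_near_half_bounds:
  fixes g p x :: real
  assumes "\<bar>1 - 2 * g\<bar> * ln p \<le> 1/2" "1 \<le> x" "x \<le> p"
  shows "x / 2 \<le> x powr (2 * (1 - g))" "x powr (2 * (1 - g)) \<le> 2 * x"
proof -
  have "\<bar>(1 - 2 * g) * ln x\<bar> \<le> \<bar>1 - 2 * g\<bar> * ln p"
    using assms(2,3) by (simp add: abs_mult mult_left_mono)
  then have small: "\<bar>(1 - 2 * g) * ln x\<bar> \<le> 1/2"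
    using assms(1) by linarith
  have e: "exp (1/2 :: real) \<le> 2"
    using ln2_ge_two_thirds by (simp add: ln_ge_iff [symmetric])
  have "x powr (2 * (1 - g)) = x * exp ((1 - 2 * g) * ln x)"
    using assms(2) powr_mult_base[of x "1 - 2 * g"] by (simp add: powr_def algebra_simps)
  moreover have "exp ((1 - 2 * g) * ln x) \<le> 2"
    using small e by (meson abs_le_D1 exp_le_cancel_iff order_trans)
  moreover have "1 / 2 \<le> exp ((1 - 2 * g) * ln x)"
  proof -
    have "exp (- (1/2)) \<le> exp ((1 - 2 * g) * ln x)"
      using small by simp
    moreover have "1 / 2 \<le> exp (- (1/2 :: real))"
      using e by (simp add: exp_minus field_simps)
    ultimately show ?thesis
      by linarith
  qed
  ultimately show "x / 2 \<le> x powr (2 * (1 - g))" "x powr (2 * (1 - g)) \<le> 2 * x"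
    using assms(2) by (simp_all add: mult_left_mono)
qed

lemma ctil_pred_sq_near_half:
  assumes "0 < g" "g < 1" "\<bar>1 - 2 * g\<bar> * ln (real p) \<le> 1/2" "1 \<le> m" "m \<le> p"
  shows "(ctil (g - 1) m)^2 \<le> 8 / real m"
proof -
  have "(ctil (g - 1) m)^2 \<le> 4 * (1 - g)^2 * real m powr (2 * (1 - g)) / (real m)^2"
    using ctil_pred_sq_le[OF assms(1,2,4)] .
  also have "\<dots> \<le> 4 * 1 * (2 * real m) / (real m)^2"
    using powr_near_half_bounds(2)[OF assms(3), of "real m"] assms
    by (intro divide_right_mono mult_mono) (auto simp: power_le_one)
  also have "\<dots> = 8 / real m"
    using assms(4) by (simp add: power2_eq_square)
  finally show ?thesis .
qed

lemma sum_ctil_neg_sq_near_half: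
  assumes "0 < g" "g < 1" "2 \<le> p" "\<bar>1 - 2 * g\<bar> * ln (real p) \<le> 1/2"
  shows "(\<Sum>m<p. (ctil (- g) m)^2) \<le> 2 + 2 * ln (real p)"
proof -
  have "(ctil (- g) m)^2 \<le> 2 * (1 / (real m + 1))" if "m < p" for m
  proof -
    have "(ctil (- g) m)^2 * ((real m + 1) / 2) \<le> (ctil (- g) m)^2 * (real m + 1) powr (2 * (1 - g))"
      using powr_near_half_bounds(1)[OF assms(4), of "real m + 1"] that by (intro mult_left_mono) auto
    also have "\<dots> \<le> 1"
      by (rule ctil_neg_sq_le[OF assms(1,2)])
    finally show ?thesis
      by (simp add: field_simps)
  qed
  then have "(\<Sum>m<p. (ctil (- g) m)^2) \<le> (\<Sum>m<p. 2 * (1 / (real m + 1)))"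
    by (intro sum_mono) simp
  also have "\<dots> \<le> 2 + 2 * ln (real p)"
    using sum_inverse_Suc_le[of p] assms(3) unfolding sum_distrib_left [symmetric] by simp
  finally show ?thesis .
qed

lemma one_minus_ge_near_half:
  assumes "0 < g" "2 \<le> p" "\<bar>1 - 2 * g\<bar> * ln (real p) \<le> 1/2"
  shows "1/8 \<le> 1 - g"
proof -
  have "\<bar>1 - 2 * g\<bar> * (2/3) \<le> 1/2"
    using assms(3) ln_nat_ge_two_thirds[OF assms(2)] by (meson abs_ge_zero mult_left_mono order_trans)
  then show ?thesis
    using assms(1) by (auto simp: abs_if split: if_splits)
qed

lemma frob_factor_near_half:
  assumes "0 < g" "g < 1" "2 \<le> p" "\<bar>1 - 2 * g\<bar> * ln (real p) \<le> 1/2"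
  shows "frob_factor g p n \<le> 26 * ln (real p) + 16 * real n / real p"
proof -
  define q where "q = p - 1"
  have q: "p = Suc q" "1 \<le> q" "q \<le> p" "real p \<le> 2 * real q"
    using assms(3) by (auto simp: q_def)
  have "(\<Sum>m<p. (ctil (g - 1) m)^2) = 1 + (\<Sum>m<q. (ctil (g - 1) (Suc m))^2)"
    unfolding q(1) sum.lessThan_Suc_shift by simp
  also have "\<dots> \<le> 1 + (\<Sum>m<q. 8 * (1 / (real m + 1)))"
  proof (intro add_left_mono sum_mono)
    fix m
    assume "m \<in> {..<q}"
    then show "(ctil (g - 1) (Suc m))^2 \<le> 8 * (1 / (real m + 1))"
      using ctil_pred_sq_near_half[OF assms(1,2,4), of "Suc m"] q by (simp add: add.commute)
  qed
  also have "\<dots> \<le> 1 + 8 * (1 + ln (real q))"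
    using sum_inverse_Suc_le[OF q(2)] unfolding sum_distrib_left [symmetric] by simp
  also have "\<dots> \<le> 26 * ln (real p)"
  proof -
    have "ln (real q) \<le> ln (real p)"
      using q(2,3) by simp
    then show ?thesis
      using ln_nat_ge_two_thirds[OF assms(3)] by (simp add: algebra_simps)
  qed
  finally have head: "(\<Sum>m<p. (ctil (g - 1) m)^2) \<le> 26 * ln (real p)" .
  have "real n * (ctil (g - 1) q)^2 \<le> real n * (8 / real q)"
    using ctil_pred_sq_near_half[OF assms(1,2,4) q(2,3)] by (intro mult_left_mono) auto
  also have "\<dots> \<le> 16 * real n / real p"
    using q by (simp add: field_simps mult_left_mono)
  finally show ?thesis
    using head by (simp add: frob_factor_def q_def)
qed

lemma sens_factor_near_half:
  assumes "0 < g" "g < 1" "2 \<le> p" "1 \<le> b" "\<bar>1 - 2 * g\<bar> * ln (real p) \<le> 1/2"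
  shows "sens_factor g p b \<le> 70 * ln (real p) + 1024 * real p / real b"
proof -
  define d where "d = 1 - g"
  define P where "P = real p powr (2 * d)"
  have d: "1/8 \<le> d" "d \<le> 1"
    using one_minus_ge_near_half[OF assms(1,3,5)] assms(1) by (auto simp: d_def)
  have P: "real p / 2 \<le> P"
    using powr_near_half_bounds(1)[OF assms(5), of "real p"] assms(3) by (simp add: P_def d_def)
  have "real p / 16 \<le> d * P"
    using mult_mono[OF d(1) P] d by simp
  then have "2 * real p / (d * P) \<le> 2 * real p / (real p / 16)"
    using assms(3) by (intro divide_left_mono) auto
  then have first: "2 * real p / (d * P) \<le> 32"
    using assms(3) by simp
  have "(1/8)^2 * (real p / 2) \<le> d^2 * P"
    using d P power_mono[OF d(1), of 2] by (intro mult_mono) auto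
  then have "real b * (real p / 128) \<le> real b * (d^2 * P)"
    by (intro mult_left_mono) (simp_all add: power2_eq_square)
  then have "8 * (real p)^2 / (real b * d^2 * P) \<le> 8 * (real p)^2 / (real b * (real p / 128))"
    using assms(3,4) by (intro frac_le) (auto simp: mult.assoc)
  then have second: "8 * (real p)^2 / (real b * d^2 * P) \<le> 1024 * real p / real b"
    using assms(3) by (simp add: power2_eq_square)
  show ?thesis
    using sens_factor_le[OF assms(1-4)] sum_ctil_neg_sq_near_half[OF assms(1-3,5)] first second
      ln_nat_ge_two_thirds[OF assms(3)]
    unfolding d_def P_def by linarith
qed

lemma rmse_near_half:
  assumes "0 < g" "g < 1" "2 \<le> p" "p \<le> n" "1 \<le> b" "\<bar>1 - 2 * g\<bar> * ln (real p) \<le> 1/2"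
  shows "rmse n k b (Bmat g p n) (strat g p n)
    \<le> 200 * (sqrt (real k) * ln (real p) + sqrt (real n * real k / real b)
      + sqrt (real n * real k * ln (real p) / real p) + sqrt (real k * real p * ln (real p) / real b))"
proof -
  define L where "L = ln (real p)"
  define T1 where "T1 = real k * L^2"
  define T2 where "T2 = real n * real k / real b"
  define T3 where "T3 = real n * real k * L / real p"
  define T4 where "T4 = real k * real p * L / real b"
  have L: "0 < L"
    using ln_nat_ge_two_thirds[OF assms(3)] by (simp add: L_def)
  have T: "0 \<le> T1" "0 \<le> T2" "0 \<le> T3" "0 \<le> T4"
    using L by (simp_all add: T1_def T2_def T3_def T4_def)
  have "(rmse n k b (Bmat g p n) (strat g p n))^2 \<le> real k * frob_factor g p n * sens_factor g p b"
    using assms by (intro rmse_strat_sq_le) auto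
  also have "\<dots> \<le> real k * (26 * L + 16 * real n / real p) * (70 * L + 1024 * real p / real b)"
    using frob_factor_near_half[OF assms(1-3,6)] sens_factor_near_half[OF assms(1-3,5,6)]
      frob_factor_nonneg sens_factor_nonneg[OF assms(1,2)] L
    by (intro mult_mono mult_left_mono) (auto simp: L_def)
  also have "\<dots> = 1820 * T1 + 26624 * T4 + 1120 * T3 + 16384 * T2"
    using assms(3,5) by (simp add: T1_def T2_def T3_def T4_def power2_eq_square field_simps)
  also have "\<dots> \<le> 200^2 * (T1 + T2 + T3 + T4)"
    using T by simp
  finally have "rmse n k b (Bmat g p n) (strat g p n) \<le> 200 * sqrt (T1 + T2 + T3 + T4)"
    by (rule le_mult_sqrt_of_sq_le [rotated]) simp
  also have "\<dots> \<le> 200 * (sqrt T1 + sqrt T2 + sqrt T3 + sqrt T4)"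
  proof -
    have "sqrt (T1 + T2 + T3 + T4) \<le> sqrt (T1 + T2 + T3) + sqrt T4"
      "sqrt (T1 + T2 + T3) \<le> sqrt (T1 + T2) + sqrt T3" "sqrt (T1 + T2) \<le> sqrt T1 + sqrt T2"
      using T by (simp_all add: sqrt_add_le_add_sqrt)
    then show ?thesis
      by simp
  qed
  finally show ?thesis
    using L by (simp add: T1_def T2_def T3_def T4_def L_def real_sqrt_mult)
qed

section \<open>The regime \<open>\<gamma> = 1 - p / sqrt n\<close>\<close>

lemma sum_ctil_pred_sq_near_one:
  assumes "0 < g" "g < 1" "1 \<le> p" "1 - g \<le> 1/4"
  shows "(\<Sum>m<p. (ctil (g - 1) m)^2) \<le> 1 + real p powr (2 * (1 - g)) / 2"
proof -
  define P where "P = real p powr (2 * (1 - g))"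
  define q where "q = p - 1"
  have q: "p = Suc q" "q \<le> p"
    using assms(3) by (auto simp: q_def)
  have P: "0 \<le> P"
    by (simp add: P_def)
  have "(\<Sum>m<p. (ctil (g - 1) m)^2) = 1 + (\<Sum>m<q. (ctil (g - 1) (Suc m))^2)"
    unfolding q(1) sum.lessThan_Suc_shift by simp
  also have "\<dots> \<le> 1 + (\<Sum>m<q. (4 * (1 - g)^2 * P) * (1 / (real m + 1)^2))"
  proof (intro add_left_mono sum_mono)
    fix m
    assume "m \<in> {..<q}"
    then show "(ctil (g - 1) (Suc m))^2 \<le> (4 * (1 - g)^2 * P) * (1 / (real m + 1)^2)"
      using ctil_pred_sq_le_powr[OF assms(1,2), of "Suc m" p] q by (simp add: P_def add.commute)
  qed
  also have "\<dots> \<le> 1 + (4 * (1 - g)^2 * P) * 2"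
    using sum_inverse_Suc_squared_le[of q] P unfolding sum_distrib_left [symmetric]
    by (intro add_left_mono mult_left_mono) auto
  also have "\<dots> \<le> 1 + P / 2"
  proof -
    have "(1 - g) * (1 - g) \<le> 1/4 * (1/4)"
      using assms(2,4) by (intro mult_mono) auto
    then have "(1 - g)^2 * P \<le> 1/16 * P"
      using P by (intro mult_right_mono) (auto simp: power2_eq_square)
    then show ?thesis
      by simp
  qed
  finally show ?thesis
    by (simp add: P_def)
qed

lemma frob_factor_near_one:
  assumes "0 < g" "g < 1" "2 \<le> p" "1 - g \<le> 1/4" "real n * (1 - g)^2 \<le> (real p)^2"
  shows "frob_factor g p n \<le> 18 * real p powr (2 * (1 - g))"
proof -
  define P where "P = real p powr (2 * (1 - g))"
  define q where "q = p - 1"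
  have q: "1 \<le> q" "q \<le> p" "real p \<le> 2 * real q"
    using assms(3) by (auto simp: q_def)
  have P: "1 \<le> P"
    using assms(2,3) by (simp add: P_def ge_one_powr_ge_zero)
  have "real n * (ctil (g - 1) q)^2 \<le> real n * (4 * (1 - g)^2 * P / (real q)^2)"
    using ctil_pred_sq_le_powr[OF assms(1,2) q(1,2)] by (intro mult_left_mono) (auto simp: P_def)
  also have "\<dots> \<le> 4 * (real p)^2 * P / (real q)^2"
    using assms(5) P q by (simp add: field_simps mult_right_mono)
  also have "\<dots> \<le> 16 * P"
  proof -
    have "(real p)^2 \<le> 4 * (real q)^2"
      using power_mono[OF q(3), of 2] by (simp add: power_mult_distrib)
    then show ?thesis
      using P q by (simp add: field_simps mult_right_mono)
  qed
  moreover have "(\<Sum>m<p. (ctil (g - 1) m)^2) \<le> 1 + P / 2"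
    using sum_ctil_pred_sq_near_one[OF assms(1,2) _ assms(4), of p] assms(3) by (simp add: P_def)
  ultimately show ?thesis
    using P by (simp add: frob_factor_def q_def P_def)
qed

lemma sum_ctil_neg_sq_near_one:
  assumes "0 < g" "g < 1" "1 - g \<le> 1/4"
  shows "real p powr (2 * (1 - g)) * (\<Sum>m<p. (ctil (- g) m)^2) \<le> 2 * real p"
proof -
  define d where "d = 1 - g"
  have "real p powr (2 * d) * (ctil (- g) m)^2 \<le> sqrt (real p) * (1 / sqrt (real m + 1))" if "m < p" for m
  proof -
    have r: "1 \<le> real p / (real m + 1)"
      using that by simp
    have "real p powr (2 * d) * (ctil (- g) m)^2
        = (real p / (real m + 1)) powr (2 * d) * ((ctil (- g) m)^2 * (real m + 1) powr (2 * d))"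
      by (simp add: powr_divide)
    also have "\<dots> \<le> (real p / (real m + 1)) powr (2 * d) * 1"
      using ctil_neg_sq_le[OF assms(1,2), of m] by (intro mult_left_mono) (auto simp: d_def)
    also have "\<dots> \<le> (real p / (real m + 1)) powr (1/2)"
      using r assms by (simp add: powr_mono d_def)
    also have "\<dots> = sqrt (real p) * (1 / sqrt (real m + 1))"
      by (simp add: powr_half_sqrt real_sqrt_divide)
    finally show ?thesis .
  qed
  then have "real p powr (2 * d) * (\<Sum>m<p. (ctil (- g) m)^2) \<le> sqrt (real p) * (\<Sum>m<p. 1 / sqrt (real m + 1))"
    unfolding sum_distrib_left by (intro sum_mono) simp
  also have "\<dots> \<le> sqrt (real p) * (2 * sqrt (real p))"
    using sum_inverse_sqrt_Suc_le[of p] by (intro mult_left_mono) auto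
  also have "\<dots> = 2 * real p"
    by (simp add: ac_simps)
  finally show ?thesis
    by (simp add: d_def)
qed

lemma sens_factor_near_one:
  assumes "0 < g" "g < 1" "2 \<le> p" "1 \<le> b" "1 - g \<le> 1/4"
  shows "real p powr (2 * (1 - g)) * sens_factor g p b
    \<le> 2 * real p + 2 * real p / (1 - g) + 8 * (real p)^2 / (real b * (1 - g)^2)"
proof -
  define d where "d = 1 - g"
  define P where "P = real p powr (2 * d)"
  have P: "0 < P"
    using assms(3) by (simp add: P_def)
  have "P * sens_factor g p b \<le> P * ((\<Sum>m<p. (ctil (- g) m)^2)
      + 2 * real p / (d * P) + 8 * (real p)^2 / (real b * d^2 * P))"
    using sens_factor_le[OF assms(1-4)] P by (simp add: d_def P_def)
  also have "\<dots> = P * (\<Sum>m<p. (ctil (- g) m)^2) + 2 * real p / d + 8 * (real p)^2 / (real b * d^2)"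
    using P by (simp add: field_simps)
  finally show ?thesis
    using sum_ctil_neg_sq_near_one[OF assms(1,2,5), of p] by (simp add: d_def P_def)
qed

lemma rmse_sq_near_one:
  assumes "0 < g" "g < 1" "2 \<le> p" "p \<le> n" "1 \<le> b"
    and "1 - g \<le> 1/4" "real n * (1 - g)^2 \<le> (real p)^2"
  shows "(rmse n k b (Bmat g p n) (strat g p n))^2
    \<le> 18 * real k * (2 * real p + 2 * real p / (1 - g) + 8 * (real p)^2 / (real b * (1 - g)^2))"
proof -
  define P where "P = real p powr (2 * (1 - g))"
  have "(rmse n k b (Bmat g p n) (strat g p n))^2 \<le> real k * frob_factor g p n * sens_factor g p b"
    using assms by (intro rmse_strat_sq_le) auto
  also have "\<dots> \<le> real k * (18 * P) * sens_factor g p b"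
    using frob_factor_near_one[OF assms(1-3,6,7)] sens_factor_nonneg[OF assms(1,2)]
    by (intro mult_right_mono mult_left_mono) (auto simp: P_def)
  also have "\<dots> = 18 * real k * (P * sens_factor g p b)"
    by simp
  also have "\<dots> \<le> 18 * real k * (2 * real p + 2 * real p / (1 - g) + 8 * (real p)^2 / (real b * (1 - g)^2))"
    using sens_factor_near_one[OF assms(1-3,5,6)] by (intro mult_left_mono) (simp_all add: P_def)
  finally show ?thesis .
qed

lemma rmse_near_one:
  assumes "2 \<le> p" "p \<le> n" "1 \<le> b" "real p \<le> sqrt (real n) / 4"
  shows "rmse n k b (Bmat (1 - real p / sqrt (real n)) p n) (strat (1 - real p / sqrt (real n)) p n)
    \<le> 200 * (sqrt (real k) * real n powr (1/4) + sqrt (real n * real k / real b))"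
proof -
  define s where "s = sqrt (real n)"
  define g where "g = 1 - real p / s"
  have s: "0 < s" "4 * real p \<le> s" "s^2 = real n"
    using assms by (auto simp: s_def)
  have g: "0 < g" "g < 1" "1 - g \<le> 1/4" "1 - g = real p / s"
    using s assms(1,2) by (auto simp: g_def field_simps)
  have n: "real n * (1 - g)^2 = (real p)^2"
    using s g(4) assms(1,2) by (simp add: power_divide)
  have "2 * real p / (1 - g) = 2 * s"
    using g s by (simp add: field_simps)
  moreover have "8 * (real p)^2 / (real b * (1 - g)^2) = 8 * real n / real b"
    unfolding n [symmetric] using g(2) by simp
  ultimately have "(rmse n k b (Bmat g p n) (strat g p n))^2
      \<le> 18 * real k * (2 * real p + 2 * s + 8 * real n / real b)"
    using rmse_sq_near_one[OF g(1,2) assms(1-3) g(3)] n by simp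
  also have "\<dots> \<le> 18 * real k * (8 * (s + real n / real b))"
    using s by (intro mult_left_mono) auto
  also have "\<dots> = 12^2 * (real k * s + real n * real k / real b)"
    by (simp add: algebra_simps)
  finally have "rmse n k b (Bmat g p n) (strat g p n) \<le> 12 * sqrt (real k * s + real n * real k / real b)"
    by (rule le_mult_sqrt_of_sq_le [rotated]) simp
  also have "\<dots> \<le> 200 * (sqrt (real k * s) + sqrt (real n * real k / real b))"
    using s sqrt_add_le_add_sqrt[of "real k * s" "real n * real k / real b"]
    by (intro mult_mono) auto
  also have "sqrt (real k * s) = sqrt (real k) * real n powr (1/4)"
    by (simp add: s_def real_sqrt_mult powr_half_sqrt [symmetric] powr_powr)
  finally show ?thesis
    by (simp add: g_def s_def)
qed

theorem mainTheorem1: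
  shows "\<exists>K>0. \<forall>n p k b :: nat.
    2 \<le> p \<longrightarrow> p \<le> n \<longrightarrow> 1 \<le> b \<longrightarrow> 1 \<le> k \<longrightarrow> real k \<le> real n / real b \<longrightarrow>
    ((\<forall>\<gamma>::real. 0 < \<gamma> \<longrightarrow> \<gamma> < 1 \<longrightarrow> \<bar>\<gamma> - 1/2\<bar> \<le> 1 / (4 * ln (real p)) \<longrightarrow>
        rmse n k b (Bmat \<gamma> p n) (strat \<gamma> p n)
          \<le> K * (sqrt (real k) * ln (real p) + sqrt (real n * real k / real b)
                 + sqrt (real n * real k * ln (real p) / real p)
                 + sqrt (real k * real p * ln (real p) / real b))) \<and>
     (real p \<le> sqrt (real n) / 4 \<longrightarrow>
        (let \<gamma> = 1 - real p / sqrt (real n) in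
          rmse n k b (Bmat \<gamma> p n) (strat \<gamma> p n)
          \<le> K * (sqrt (real k) * real n powr (1/4) + sqrt (real n * real k / real b)))))"
proof (intro exI [of _ 200] conjI allI impI)
  fix n p k b :: nat and \<gamma> :: real
  assume p: "2 \<le> p" "p \<le> n" and b: "1 \<le> b" and \<gamma>: "0 < \<gamma>" "\<gamma> < 1"
    and near: "\<bar>\<gamma> - 1/2\<bar> \<le> 1 / (4 * ln (real p))"
  have "0 < ln (real p)"
    using p(1) by simp
  then have "\<bar>1 - 2 * \<gamma>\<bar> * ln (real p) \<le> 1/2"
    using near by (simp add: abs_minus_commute [of 1] field_simps abs_mult [symmetric])
  then show "rmse n k b (Bmat \<gamma> p n) (strat \<gamma> p n)
      \<le> 200 * (sqrt (real k) * ln (real p) + sqrt (real n * real k / real b)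
        + sqrt (real n * real k * ln (real p) / real p) + sqrt (real k * real p * ln (real p) / real b))"
    using p b \<gamma> by (intro rmse_near_half)
next
  fix n p k b :: nat
  assume "2 \<le> p" "p \<le> n" "1 \<le> b" "real p \<le> sqrt (real n) / 4"
  then show "let \<gamma> = 1 - real p / sqrt (real n) in
      rmse n k b (Bmat \<gamma> p n) (strat \<gamma> p n)
        \<le> 200 * (sqrt (real k) * real n powr (1/4) + sqrt (real n * real k / real b))"
    unfolding Let_def by (rule rmse_near_one)
qed simp

end
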